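(* Let $X_0^*$ be a $\{1,2,\dots\}$-valued random variable with $\mathbf P(X_0^*=k)\sim c_0m^{-k}k^{-\alpha}$ as $k\to\infty$, for some $0<c_0<\infty$ and $2\le\alpha\le4$. Let $\ell_0\ge1$ be the smallest integer $k\ge1$ with $\mathbf P(X_0^*=k)>0$. For integers $M>\ell_0$ let $\varrho=\varrho(M,\alpha)$ be as follows: if $\alpha=2$, $\varrho:=0$; if $2<\alpha\le4$, $\varrho$ is independent of $X_0^*$ with $\mathbf P(\varrho=0)=M^{-(\alpha-2)}=1-\mathbf P(\varrho=\ell_0)$. Set $X_0^{(M)}:=\varrho\mathbf 1_{\{X_0^*=\ell_0\}}+X_0^*\mathbf 1_{\{\ell_0<X_0^*\le M\}}$ and $p_M:=\big(1+\mathbf E\{[(m-1)X_0^{(M)}-1]m^{X_0^{(M)}}\}\big)^{-1}$. Then, as $M\to\infty$, $$p_M-p_c(X_0^* )\sim\begin{cases}\frac{c_{48}}{M^{\alpha-2}},&2<\alpha\le4,\\[2pt] \frac{1}{(m-1)c_0}\,\frac{1}{\log M},&\alpha=2,\end{cases}$$ where for $2<\alpha\le4$, $c_{48}:=[p_c(X_0^* )]^2c_{49}>0$ with $$c_{49}:=\frac{(m-1)c_0}{\alpha-2}+\{[(m-1)\ell_0-1]m^{\ell_0}+1\}\,\mathbf P(X_0^*=\ell_0).$$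
   Context: Fix an integer $m\ge2$. $p_c(X_0^* ):=\frac{1}{1+\mathbf E\{[(m-1)X_0^*-1]m^{X_0^*}\}}$, interpreted as $0$ when the expectation is infinite (so $p_c(X_0^* )=0$ when $\alpha=2$ and $p_c(X_0^* )>0$ when $\alpha>2$); it is the critical parameter of the recursive system $X_{n+1}\overset d=(X_{n,1}+\cdots+X_{n,m}-1)^+$ started from the law $(1-p)\delta_0+pP_{X_0^*}$. $a_M\sim b_M$ means $a_M/b_M\to1$. *)

theory Defs
  imports "HOL-Probability.Probability" "HOL-Library.Landau_Symbols"
begin

definition crit_fun :: "nat \<Rightarrow> nat \<Rightarrow> real" where
  "crit_fun m x = ((real m - 1) * real x - 1) * real m ^ x"

text \<open>Critical parameter p_c(X): 1/(1+E f(X)), and 0 when E f(X) is infinite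
  (f is nonnegative on {1,2,...}, so infinite expectation = non-integrability).\<close>
definition p_crit :: "nat \<Rightarrow> nat pmf \<Rightarrow> real" where
  "p_crit m X = (if integrable (measure_pmf X) (crit_fun m)
                 then 1 / (1 + measure_pmf.expectation X (crit_fun m)) else 0)"

definition ell0 :: "nat pmf \<Rightarrow> nat" where
  "ell0 X = (LEAST k. 1 \<le> k \<and> 0 < pmf X k)"

definition rho_pmf :: "nat \<Rightarrow> real \<Rightarrow> nat \<Rightarrow> nat pmf" where
  "rho_pmf M \<alpha> l = (if \<alpha> = 2 then return_pmf 0
      else map_pmf (\<lambda>b. if b then 0 else l) (bernoulli_pmf (real M powr (-(\<alpha> - 2)))))"

definition trunc_pmf :: "nat pmf \<Rightarrow> nat \<Rightarrow> real \<Rightarrow> nat pmf" where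
  "trunc_pmf X M \<alpha> =
     map_pmf (\<lambda>(x, r). (if x = ell0 X then r else 0) + (if ell0 X < x \<and> x \<le> M then x else 0))
       (pair_pmf X (rho_pmf M \<alpha> (ell0 X)))"

definition p_M :: "nat \<Rightarrow> nat pmf \<Rightarrow> real \<Rightarrow> nat \<Rightarrow> real" where
  "p_M m X \<alpha> M = 1 / (1 + measure_pmf.expectation (trunc_pmf X M \<alpha>) (crit_fun m))"

end

theory Submission
  imports Defs "HOL-Analysis.Harmonic_Numbers" "HOL-Real_Asymp.Real_Asymp"
begin

text \<open>
  With f = crit_fun m put u k = crit_weight m X k = (f k + 1) P(X = k). Since f 0 = -1, the atom 0 carries no weight,
  1/p_c = \<Sum>k u k (or p_c = 0 if this diverges), and the truncated law gives
  1/p_M = \<Sum>k\<le>M u k - P(\<rho> = 0) u \<ell>0. The hypothesis on X yields u k \<sim> (m-1) c0 k^(1-\<alpha>).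
  For \<alpha> > 2 the tail beyond M is \<sim> (m-1) c0 M^(2-\<alpha>) / (\<alpha>-2) and P(\<rho> = 0) = M^(2-\<alpha>), so
  1/p_c - 1/p_M \<sim> c49 M^(2-\<alpha>), and p_M - p_c \<sim> p_c^2 c49 M^(2-\<alpha>) after linearising 1/x.
  For \<alpha> = 2 the partial sums grow like (m-1) c0 log M, so p_c = 0 and p_M \<sim> 1/((m-1) c0 log M).
\<close>

section \<open>Asymptotic equivalence of sums\<close>

lemma asymp_equiv_add_nonneg:
  fixes f1 f2 g1 g2 :: "'a \<Rightarrow> real"
  assumes "f1 \<sim>[F] g1" "f2 \<sim>[F] g2" "eventually (\<lambda>x. g1 x \<ge> 0 \<and> g2 x \<ge> 0) F"
  shows "(\<lambda>x. f1 x + f2 x) \<sim>[F] (\<lambda>x. g1 x + g2 x)"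
  unfolding asymp_equiv_altdef
proof (rule landau_o.smallI)
  fix c :: real assume "c > 0"
  from landau_o.smallD[OF asymp_equiv_imp_diff_smallo[OF assms(1)] this]
       landau_o.smallD[OF asymp_equiv_imp_diff_smallo[OF assms(2)] this] assms(3)
  show "eventually (\<lambda>x. norm (f1 x + f2 x - (g1 x + g2 x)) \<le> c * norm (g1 x + g2 x)) F"
    by eventually_elim (simp add: abs_le_iff algebra_simps; linarith)
qed

lemma asymp_equiv_partial_sums:
  fixes a b :: "nat \<Rightarrow> real"
  assumes ab: "a \<sim>[at_top] b" and b_nonneg: "eventually (\<lambda>k. b k \<ge> 0) at_top"
    and b_diverges: "filterlim (\<lambda>M. \<Sum>k\<le>M. b k) at_top at_top"
  shows "(\<lambda>M. \<Sum>k\<le>M. a k) \<sim>[at_top] (\<lambda>M. \<Sum>k\<le>M. b k)"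
  unfolding asymp_equiv_altdef
proof (rule landau_o.smallI)
  fix c :: real assume c: "c > 0"
  have "c/2 > 0" using c by simp
  from landau_o.smallD[OF asymp_equiv_imp_diff_smallo[OF ab] this] b_nonneg
  have "eventually (\<lambda>k. \<bar>a k - b k\<bar> \<le> c/2 * b k) at_top"
    by eventually_elim auto
  then obtain K where K: "\<And>k. k \<ge> K \<Longrightarrow> \<bar>a k - b k\<bar> \<le> c/2 * b k"
    by (auto simp: eventually_at_top_linorder)
  define e where "e k = (if k < K then \<bar>a k - b k\<bar> + c/2 * \<bar>b k\<bar> else 0)" for k
  have pointwise: "\<bar>a k - b k\<bar> \<le> c/2 * b k + e k" for k
    using K[of k] mult_left_mono[OF abs_ge_minus_self[of "b k"], of "c/2"] c
    by (cases "k < K") (auto simp: e_def)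
  have e_sum: "(\<Sum>k\<le>M. e k) = (\<Sum>k<K. e k)" if "K \<le> M" for M
    using that by (intro sum.mono_neutral_right) (auto simp: e_def)
  have e_nonneg: "(\<Sum>k<K. e k) \<ge> 0"
    using c by (intro sum_nonneg) (auto simp: e_def)
  have "eventually (\<lambda>M. (\<Sum>k\<le>M. b k) \<ge> 2 * (\<Sum>k<K. e k) / c \<and> M \<ge> K) at_top"
    using b_diverges eventually_ge_at_top[of K]
    by (auto simp: filterlim_at_top intro: eventually_conj)
  then show "eventually (\<lambda>M. norm ((\<Sum>k\<le>M. a k) - (\<Sum>k\<le>M. b k)) \<le> c * norm (\<Sum>k\<le>M. b k)) at_top"
  proof eventually_elim
    case (elim M)
    have "\<bar>\<Sum>k\<le>M. a k - b k\<bar> \<le> (\<Sum>k\<le>M. c/2 * b k + e k)"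
      by (rule order_trans[OF sum_abs sum_mono[OF pointwise]])
    also have "\<dots> = c/2 * (\<Sum>k\<le>M. b k) + (\<Sum>k<K. e k)"
      using elim by (simp add: sum.distrib sum_distrib_left e_sum)
    also have "\<dots> \<le> c * (\<Sum>k\<le>M. b k)"
      using elim c by (simp add: field_simps)
    moreover have "0 \<le> 2 * (\<Sum>k<K. e k) / c"
      using e_nonneg c by simp
    ultimately show ?case
      using elim by (simp add: sum_subtractf)
  qed
qed

lemma summable_asymp_equiv_nonneg:
  fixes a b :: "nat \<Rightarrow> real"
  assumes ab: "a \<sim>[at_top] b" and b_nonneg: "eventually (\<lambda>k. b k \<ge> 0) at_top"
    and b_summable: "summable b"
  shows "summable a"
proof -
  have "eventually (\<lambda>k. norm (b k) = b k) at_top"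
    using b_nonneg by eventually_elim simp
  with b_summable have "summable (\<lambda>k. norm (b k))"
    by (simp add: summable_cong)
  then show "summable a"
    by (rule summable_comparison_test_bigo[OF _ asymp_equiv_imp_bigo[OF ab]])
qed

lemma asymp_equiv_tail_sums:
  fixes a b :: "nat \<Rightarrow> real"
  assumes ab: "a \<sim>[at_top] b" and b_nonneg: "eventually (\<lambda>k. b k \<ge> 0) at_top"
    and b_summable: "summable b"
  shows "(\<lambda>M. \<Sum>j. a (j + Suc M)) \<sim>[at_top] (\<lambda>M. \<Sum>j. b (j + Suc M))"
  unfolding asymp_equiv_altdef
proof (rule landau_o.smallI)
  fix c :: real assume c: "c > 0"
  from landau_o.smallD[OF asymp_equiv_imp_diff_smallo[OF ab] c] b_nonneg
  have "eventually (\<lambda>k. \<bar>a k - b k\<bar> \<le> c * b k \<and> b k \<ge> 0) at_top"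
    by eventually_elim auto
  then obtain K where K: "\<And>k. k \<ge> K \<Longrightarrow> \<bar>a k - b k\<bar> \<le> c * b k \<and> b k \<ge> 0"
    by (auto simp: eventually_at_top_linorder)
  show "eventually (\<lambda>M. norm ((\<Sum>j. a (j + Suc M)) - (\<Sum>j. b (j + Suc M)))
                          \<le> c * norm (\<Sum>j. b (j + Suc M))) at_top"
    using eventually_ge_at_top[of K]
  proof eventually_elim
    case (elim M)
    have sa: "summable (\<lambda>j. a (j + Suc M))"
      using summable_asymp_equiv_nonneg[OF ab b_nonneg b_summable] by (subst summable_iff_shift)
    have sb: "summable (\<lambda>j. b (j + Suc M))"
      using b_summable by (subst summable_iff_shift)
    have bound: "\<bar>a (j + Suc M) - b (j + Suc M)\<bar> \<le> c * b (j + Suc M)"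
      and b_tail_nonneg: "b (j + Suc M) \<ge> 0" for j
      using K[of "j + Suc M"] elim by simp_all
    have s_abs: "summable (\<lambda>j. \<bar>a (j + Suc M) - b (j + Suc M)\<bar>)"
      by (rule summable_comparison_test'[OF summable_mult[OF sb, of c]]) (use bound in simp)
    have "\<bar>(\<Sum>j. a (j + Suc M)) - (\<Sum>j. b (j + Suc M))\<bar>
            = \<bar>\<Sum>j. a (j + Suc M) - b (j + Suc M)\<bar>"
      using sa sb by (simp add: suminf_diff)
    also have "\<dots> \<le> (\<Sum>j. \<bar>a (j + Suc M) - b (j + Suc M)\<bar>)"
      by (rule summable_rabs[OF s_abs])
    also have "\<dots> \<le> (\<Sum>j. c * b (j + Suc M))"
      by (rule suminf_le[OF bound s_abs summable_mult[OF sb]])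
    also have "\<dots> = c * (\<Sum>j. b (j + Suc M))"
      by (rule suminf_mult[OF sb])
    finally show ?case
      using suminf_nonneg[OF sb b_tail_nonneg] by simp
  qed
qed

lemma powr_neg_diff_bounds:
  fixes \<beta> x :: real
  assumes \<beta>: "\<beta> > 0" and x: "x > 0"
  shows "(x + 1) powr -(1 + \<beta>) \<le> x powr -\<beta> / \<beta> - (x + 1) powr -\<beta> / \<beta>"
    and "x powr -\<beta> / \<beta> - (x + 1) powr -\<beta> / \<beta> \<le> x powr -(1 + \<beta>)"
proof -
  have "\<exists>z. x < z \<and> z < x + 1 \<and>
          (x + 1) powr -\<beta> / \<beta> - x powr -\<beta> / \<beta> = (x + 1 - x) * (-\<beta> * z powr (-\<beta> - 1) / \<beta>)"
    by (rule MVT2) (use x in \<open>auto intro!: derivative_eq_intros\<close>)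
  then obtain z where z: "x < z" "z < x + 1"
    and mvt: "(x + 1) powr -\<beta> / \<beta> - x powr -\<beta> / \<beta> = (x + 1 - x) * (-\<beta> * z powr (-\<beta> - 1) / \<beta>)"
    by blast
  have diff: "x powr -\<beta> / \<beta> - (x + 1) powr -\<beta> / \<beta> = z powr -(1 + \<beta>)"
  proof -
    have "-\<beta> - 1 = -(1 + \<beta>)" by simp
    with mvt \<beta> show ?thesis by (simp add: algebra_simps)
  qed
  show "(x + 1) powr -(1 + \<beta>) \<le> x powr -\<beta> / \<beta> - (x + 1) powr -\<beta> / \<beta>"
    unfolding diff by (rule powr_mono2') (use z x \<beta> in auto)
  show "x powr -\<beta> / \<beta> - (x + 1) powr -\<beta> / \<beta> \<le> x powr -(1 + \<beta>)"
    unfolding diff by (rule powr_mono2') (use z x \<beta> in auto)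
qed

lemma powr_tail_sum_asymp_equiv:
  fixes \<beta> :: real
  assumes \<beta>: "\<beta> > 0"
  shows "(\<lambda>M. \<Sum>j. real (j + Suc M) powr -(1 + \<beta>)) \<sim>[at_top] (\<lambda>M. real M powr -\<beta> / \<beta>)"
proof (rule asymp_equiv_sandwich_real)
  define h where "h x = x powr -\<beta> / \<beta>" for x :: real
  have "(\<lambda>j. h (real (j + N))) \<longlonglongrightarrow> 0" for N :: nat
    unfolding h_def using \<beta> by real_asymp
  from telescope_sums'[OF this]
  have telescope: "(\<lambda>j. h (real (j + N)) - h (real (j + Suc N))) sums h (real N)" for N
    by simp
  have summable: "summable (\<lambda>j. real (j + Suc M) powr -(1 + \<beta>))" for M
    using summable_real_powr_iff[of "-(1 + \<beta>)"] \<beta> by (subst summable_iff_shift) auto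
  show "(\<lambda>M. h (real (Suc M))) \<sim>[at_top] (\<lambda>M. real M powr -\<beta> / \<beta>)"
    unfolding h_def using \<beta> by real_asymp
  show "(\<lambda>M. h (real M)) \<sim>[at_top] (\<lambda>M. real M powr -\<beta> / \<beta>)"
    unfolding h_def by simp
  show "eventually (\<lambda>M. (\<Sum>j. real (j + Suc M) powr -(1 + \<beta>))
                          \<in> {h (real (Suc M))..h (real M)}) at_top"
    using eventually_ge_at_top[of 1]
  proof eventually_elim
    case (elim M)
    have "h (real (j + Suc M)) - h (real (j + Suc (Suc M))) \<le> real (j + Suc M) powr -(1 + \<beta>)" for j
      using powr_neg_diff_bounds(2)[OF \<beta>, of "real (j + Suc M)"] by (simp add: h_def add_ac)
    then have "h (real (Suc M)) \<le> (\<Sum>j. real (j + Suc M) powr -(1 + \<beta>))"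
      unfolding sums_unique[OF telescope[of "Suc M"]]
      by (rule suminf_le[OF _ sums_summable[OF telescope] summable])
    moreover have "real (j + Suc M) powr -(1 + \<beta>) \<le> h (real (j + M)) - h (real (j + Suc M))" for j
      using powr_neg_diff_bounds(1)[OF \<beta>, of "real (j + M)"] elim by (simp add: h_def add_ac)
    then have "(\<Sum>j. real (j + Suc M) powr -(1 + \<beta>)) \<le> h (real M)"
      unfolding sums_unique[OF telescope[of M]]
      by (rule suminf_le[OF _ summable sums_summable[OF telescope]])
    ultimately show ?case by simp
  qed
qed

lemma sum_atMost_inverse_eq_harm: "(\<Sum>k\<le>n. inverse (real k)) = harm n"
  by (induction n) (simp_all add: harm_Suc harm_expand(1))

lemma harm_asymp_equiv_ln: "(\<lambda>n. harm n :: real) \<sim>[at_top] (\<lambda>n. ln (real n))"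
proof (rule asymp_equivI')
  have "(\<lambda>n. 1 + (harm n - ln (real n)) / ln (real n)) \<longlonglongrightarrow> 1 + 0"
    by (intro tendsto_add tendsto_const tendsto_divide_0[OF euler_mascheroni_LIMSEQ]) real_asymp
  then have "(\<lambda>n. 1 + (harm n - ln (real n)) / ln (real n)) \<longlonglongrightarrow> 1" by simp
  then show "(\<lambda>n. harm n / ln (real n)) \<longlonglongrightarrow> 1"
  proof (rule Lim_transform_eventually)
    show "eventually (\<lambda>n. 1 + (harm n - ln (real n)) / ln (real n) = harm n / ln (real n)) at_top"
      using eventually_ge_at_top[of 2] by eventually_elim (simp add: field_simps)
  qed
qed

section \<open>The critical weights\<close>

lemma integrable_measure_pmf_nat_iff:
  "integrable (measure_pmf p) (g :: nat \<Rightarrow> real) \<longleftrightarrow> summable (\<lambda>k. pmf p k * \<bar>g k\<bar>)"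
  unfolding measure_pmf_eq_density
  by (subst integrable_density) (auto simp: integrable_count_space_nat_iff abs_mult)

lemma measure_pmf_nat_expectation_sums:
  assumes "integrable (measure_pmf p) (g :: nat \<Rightarrow> real)"
  shows "(\<lambda>k. pmf p k * g k) sums measure_pmf.expectation p g"
proof -
  have "integrable (count_space UNIV) (\<lambda>k. pmf p k * g k)"
    using assms unfolding measure_pmf_eq_density by (subst (asm) integrable_density) auto
  from sums_integral_count_space_nat[OF this] show ?thesis
    unfolding measure_pmf_eq_density by (subst integral_density) auto
qed

lemma pmf_nat_sums_1: "pmf p sums (1 :: real)"
  using measure_pmf_nat_expectation_sums[of p "\<lambda>_. 1"] by simp

lemma crit_fun_0 [simp]: "crit_fun m 0 = -1"
  by (simp add: crit_fun_def)

lemma crit_fun_nonneg: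
  assumes "2 \<le> m" "1 \<le> k"
  shows "0 \<le> crit_fun m k"
proof -
  have "1 * 1 \<le> (real m - 1) * real k"
    using assms by (intro mult_mono) auto
  then show ?thesis
    by (simp add: crit_fun_def)
qed

definition crit_weight :: "nat \<Rightarrow> nat pmf \<Rightarrow> nat \<Rightarrow> real" where
  "crit_weight m X k = (crit_fun m k + 1) * pmf X k"

lemma crit_weight_nonneg: "2 \<le> m \<Longrightarrow> 0 \<le> crit_weight m X k"
  by (cases "k = 0") (simp_all add: crit_weight_def crit_fun_nonneg)

lemma p_crit_eq_suminf_crit_weight:
  assumes m: "2 \<le> m"
  shows "p_crit m X = (if summable (crit_weight m X) then 1 / suminf (crit_weight m X) else 0)"
proof -
  let ?u = "crit_weight m X"
  have pmf_summable: "summable (pmf X)"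
    using pmf_nat_sums_1 by (rule sums_summable)
  have "eventually (\<lambda>k. pmf X k * \<bar>crit_fun m k\<bar> = ?u k - pmf X k) at_top"
    using eventually_ge_at_top[of 1]
    by eventually_elim (simp add: crit_fun_nonneg[OF m] crit_weight_def algebra_simps)
  then have "integrable (measure_pmf X) (crit_fun m) \<longleftrightarrow> summable (\<lambda>k. ?u k - pmf X k)"
    unfolding integrable_measure_pmf_nat_iff by (rule summable_cong)
  also have "\<dots> \<longleftrightarrow> summable ?u"
    using summable_diff[OF _ pmf_summable] summable_add[OF _ pmf_summable] by fastforce
  finally have integrable_iff: "integrable (measure_pmf X) (crit_fun m) \<longleftrightarrow> summable ?u" .
  have "measure_pmf.expectation X (crit_fun m) = suminf ?u - 1" if "summable ?u"
  proof (rule sums_unique2)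
    show "(\<lambda>k. pmf X k * crit_fun m k) sums measure_pmf.expectation X (crit_fun m)"
      using integrable_iff that by (intro measure_pmf_nat_expectation_sums) simp
    have "(\<lambda>k. pmf X k * crit_fun m k) = (\<lambda>k. ?u k - pmf X k)"
      by (simp add: fun_eq_iff crit_weight_def algebra_simps)
    then show "(\<lambda>k. pmf X k * crit_fun m k) sums (suminf ?u - 1)"
      using sums_diff[OF summable_sums[OF that] pmf_nat_sums_1[of X]] by simp
  qed
  then show ?thesis
    using integrable_iff by (simp add: p_crit_def)
qed

lemma ell0_spec:
  assumes "\<exists>k\<ge>1. 0 < pmf X k"
  shows "1 \<le> ell0 X" and "0 < pmf X (ell0 X)" and "\<And>k. 0 < k \<Longrightarrow> k < ell0 X \<Longrightarrow> pmf X k = 0"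
proof -
  have "1 \<le> ell0 X \<and> 0 < pmf X (ell0 X)"
    unfolding ell0_def using assms by (rule LeastI_ex)
  then show "1 \<le> ell0 X" and "0 < pmf X (ell0 X)"
    by simp_all
  fix k assume "0 < k" "k < ell0 X"
  then show "pmf X k = 0"
    using not_less_Least[of k "\<lambda>k. 1 \<le> k \<and> 0 < pmf X k"] pmf_nonneg[of X k]
    unfolding ell0_def by fastforce
qed

lemma crit_weight_below_ell0:
  assumes "\<exists>k\<ge>1. 0 < pmf X k" "k < ell0 X"
  shows "crit_weight m X k = 0"
  using ell0_spec(3)[OF assms(1), of k] assms(2) by (cases "k = 0") (simp_all add: crit_weight_def)

section \<open>The truncated law\<close>

lemma set_rho_pmf: "set_pmf (rho_pmf M \<alpha> l) \<subseteq> {0, l}"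
  by (auto simp: rho_pmf_def)

lemma pmf_rho_pmf_0:
  assumes "1 \<le> l" "1 \<le> M" "2 \<le> \<alpha>"
  shows "pmf (rho_pmf M \<alpha> l) 0 = (if \<alpha> = 2 then 1 else real M powr -(\<alpha> - 2))"
proof -
  have "real M powr -(\<alpha> - 2) \<le> real M powr 0"
    using assms by (intro powr_mono) auto
  moreover have "(\<lambda>b. if b then 0 else l) -` {0} = {True}"
    using assms by (auto split: if_splits)
  ultimately show ?thesis
    using assms by (auto simp: rho_pmf_def pmf_map measure_pmf_single)
qed

definition trunc_value :: "nat \<Rightarrow> nat \<Rightarrow> nat \<times> nat \<Rightarrow> nat" where
  "trunc_value l M = (\<lambda>(x, r). (if x = l then r else 0) + (if l < x \<and> x \<le> M then x else 0))"

lemma trunc_pmf_eq_map_pmf: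
  "trunc_pmf X M \<alpha> = map_pmf (trunc_value (ell0 X) M) (pair_pmf X (rho_pmf M \<alpha> (ell0 X)))"
  by (simp add: trunc_pmf_def trunc_value_def)

lemma expectation_crit_fun_trunc_value:
  assumes \<rho>: "set_pmf \<rho> \<subseteq> {0, l}" and M: "l \<le> M"
  shows "measure_pmf.expectation (pair_pmf X \<rho>) (\<lambda>z. crit_fun m (trunc_value l M z) + 1)
           = (\<Sum>a\<le>M. pmf X a * (\<Sum>r\<in>{0, l}. pmf \<rho> r * (crit_fun m (trunc_value l M (a, r)) + 1)))"
proof -
  let ?G = "\<lambda>z. crit_fun m (trunc_value l M z) + 1"
  have "measure_pmf.expectation (pair_pmf X \<rho>) ?G = (\<Sum>z\<in>{..M} \<times> {0, l}. pmf (pair_pmf X \<rho>) z *\<^sub>R ?G z)"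
  proof (rule integral_measure_pmf)
    fix z assume z: "z \<in> set_pmf (pair_pmf X \<rho>)" "?G z \<noteq> 0"
    have "trunc_value l M z \<noteq> 0"
    proof
      assume "trunc_value l M z = 0"
      with z(2) show False by simp
    qed
    with z(1) \<rho> M show "z \<in> {..M} \<times> {0, l}"
      by (auto simp: trunc_value_def split: if_splits)
  qed simp
  also have "\<dots> = (\<Sum>a\<le>M. pmf X a * (\<Sum>r\<in>{0, l}. pmf \<rho> r * ?G (a, r)))"
    by (simp add: sum.cartesian_product sum_distrib_left mult.assoc)
       (rule sum.cong, auto simp: pmf_pair)
  finally show ?thesis .
qed

lemma expectation_trunc_pmf:
  assumes pos: "\<exists>k\<ge>1. 0 < pmf X k" and M: "ell0 X \<le> M"
  shows "measure_pmf.expectation (trunc_pmf X M \<alpha>) (crit_fun m)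
           = (\<Sum>k\<le>M. crit_weight m X k)
               - pmf (rho_pmf M \<alpha> (ell0 X)) 0 * crit_weight m X (ell0 X) - 1"
proof -
  define l where "l = ell0 X"
  define \<rho> where "\<rho> = rho_pmf M \<alpha> l"
  have l: "1 \<le> l" and below: "\<And>k. k < l \<Longrightarrow> crit_weight m X k = 0" and lM: "l \<le> M"
    using ell0_spec(1)[OF pos] crit_weight_below_ell0[OF pos] M by (simp_all add: l_def)
  have set_\<rho>: "set_pmf \<rho> \<subseteq> {0, l}"
    unfolding \<rho>_def by (rule set_rho_pmf)
  have \<rho>_l: "pmf \<rho> l = 1 - pmf \<rho> 0"
    using sum_pmf_eq_1[OF _ set_\<rho>] l by simp
  have trunc: "trunc_pmf X M \<alpha> = map_pmf (trunc_value l M) (pair_pmf X \<rho>)"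
    unfolding l_def \<rho>_def by (rule trunc_pmf_eq_map_pmf)
  have "set_pmf (trunc_pmf X M \<alpha>) \<subseteq> {..M}"
    using set_\<rho> lM unfolding trunc by (auto simp: trunc_value_def)
  then have "measure_pmf.expectation (trunc_pmf X M \<alpha>) (crit_fun m)
               = measure_pmf.expectation (trunc_pmf X M \<alpha>) (\<lambda>y. crit_fun m y + 1) - 1"
    by (subst Bochner_Integration.integral_add)
       (auto intro: integrable_measure_pmf_finite finite_subset)
  also have "measure_pmf.expectation (trunc_pmf X M \<alpha>) (\<lambda>y. crit_fun m y + 1)
               = (\<Sum>a\<le>M. pmf X a * (\<Sum>r\<in>{0, l}. pmf \<rho> r * (crit_fun m (trunc_value l M (a, r)) + 1)))"
    unfolding trunc integral_map_pmf by (rule expectation_crit_fun_trunc_value[OF set_\<rho> lM])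
  also have "\<dots> = (\<Sum>a\<le>M. crit_weight m X a - (if a = l then pmf \<rho> 0 * crit_weight m X l else 0))"
  proof (rule sum.cong[OF refl])
    fix a assume "a \<in> {..M}"
    then consider "a < l" | "a = l" | "l < a" "a \<le> M"
      by fastforce
    then show "pmf X a * (\<Sum>r\<in>{0, l}. pmf \<rho> r * (crit_fun m (trunc_value l M (a, r)) + 1))
                 = crit_weight m X a - (if a = l then pmf \<rho> 0 * crit_weight m X l else 0)"
      by cases (use below l in \<open>auto simp: trunc_value_def crit_weight_def \<rho>_l algebra_simps\<close>)
  qed
  also have "\<dots> = (\<Sum>a\<le>M. crit_weight m X a) - pmf \<rho> 0 * crit_weight m X l"
    using lM by (simp add: sum_subtractf)
  finally show ?thesis
    by (simp add: l_def \<rho>_def)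
qed

lemma p_M_eq:
  assumes pos: "\<exists>k\<ge>1. 0 < pmf X k" and M: "ell0 X \<le> M" and \<alpha>: "2 \<le> \<alpha>"
  shows "p_M m X \<alpha> M = 1 / ((\<Sum>k\<le>M. crit_weight m X k)
           - (if \<alpha> = 2 then 1 else real M powr -(\<alpha> - 2)) * crit_weight m X (ell0 X))"
proof -
  have "1 \<le> ell0 X"
    by (rule ell0_spec(1)[OF pos])
  with pmf_rho_pmf_0[OF this _ \<alpha>, of M] M show ?thesis
    by (simp add: p_M_def expectation_trunc_pmf[OF pos M])
qed

section \<open>Laws with a geometric-power tail\<close>

locale geometric_power_tail =
  fixes m :: nat and X :: "nat pmf" and c0 \<alpha> :: real
  assumes m_ge_2: "2 \<le> m" and c0_pos: "0 < c0"
    and pmf_asymp: "(\<lambda>k. pmf X k) \<sim>[at_top] (\<lambda>k. c0 * real m powr (- real k) * real k powr (- \<alpha>))"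
begin

lemma crit_weight_asymp_equiv:
  "crit_weight m X \<sim>[at_top] (\<lambda>k. (real m - 1) * c0 * real k powr (1 - \<alpha>))"
proof -
  have "(\<lambda>k. (crit_fun m k + 1) * pmf X k) \<sim>[at_top] (\<lambda>k. ((real m - 1) * real k * real m ^ k)
                               * (c0 * real m powr (- real k) * real k powr (- \<alpha>)))"
  proof (rule asymp_equiv_mult[OF _ pmf_asymp])
    show "(\<lambda>k. crit_fun m k + 1) \<sim>[at_top] (\<lambda>k. (real m - 1) * real k * real m ^ k)"
      using m_ge_2 unfolding crit_fun_def by real_asymp
  qed
  also have "\<dots> \<sim>[at_top] (\<lambda>k. (real m - 1) * c0 * real k powr (1 - \<alpha>))"
  proof (rule asymp_equiv_refl_ev)
    show "eventually (\<lambda>k. (real m - 1) * real k * real m ^ k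
                             * (c0 * real m powr (- real k) * real k powr (- \<alpha>))
                           = (real m - 1) * c0 * real k powr (1 - \<alpha>)) at_top"
      using eventually_gt_at_top[of 0]
    proof eventually_elim
      case (elim k)
      have "real m ^ k * real m powr (- real k) = 1"
        using m_ge_2 by (simp add: powr_minus powr_realpow)
      moreover have "real k * real k powr (- \<alpha>) = real k powr (1 - \<alpha>)"
        using elim by (simp add: powr_diff powr_minus divide_inverse)
      ultimately show ?case
        by (metis (no_types, lifting) mult.assoc mult.left_commute mult.right_neutral)
    qed
  qed
  finally show ?thesis
    by (simp add: crit_weight_def[abs_def])
qed

lemma exists_pmf_pos: "\<exists>k\<ge>1. 0 < pmf X k"
proof -
  have "eventually (\<lambda>k. 0 < c0 * real m powr (- real k) * real k powr (- \<alpha>) \<and> k \<ge> 1) at_top"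
    using eventually_ge_at_top[of 1] by eventually_elim (use c0_pos m_ge_2 in simp)
  with asymp_equiv_eventually_pos_iff[OF pmf_asymp]
  have "eventually (\<lambda>k. 0 < pmf X k \<and> k \<ge> 1) at_top"
    by eventually_elim blast
  then obtain N where "\<And>k. k \<ge> N \<Longrightarrow> 0 < pmf X k \<and> k \<ge> 1"
    by (auto simp: eventually_at_top_linorder)
  then show ?thesis
    by blast
qed

lemma crit_weight_ell0_pos: "0 < crit_weight m X (ell0 X)"
  using ell0_spec(1,2)[OF exists_pmf_pos] crit_fun_nonneg[OF m_ge_2]
  by (simp add: crit_weight_def add_nonneg_pos)

lemma crit_weight_tail_asymp_equiv:
  assumes "2 < \<alpha>"
  shows "summable (crit_weight m X)"
    and "(\<lambda>M. \<Sum>j. crit_weight m X (j + Suc M))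
           \<sim>[at_top] (\<lambda>M. (real m - 1) * c0 / (\<alpha> - 2) * real M powr -(\<alpha> - 2))"
proof -
  define C where "C = (real m - 1) * c0"
  define \<beta> where "\<beta> = \<alpha> - 2"
  have \<beta>: "0 < \<beta>" and exponent: "1 - \<alpha> = -(1 + \<beta>)"
    using assms by (simp_all add: \<beta>_def)
  have C: "0 \<le> C"
    using m_ge_2 c0_pos by (simp add: C_def)
  have comparison: "summable (\<lambda>k. C * real k powr (1 - \<alpha>))"
    using summable_real_powr_iff[of "1 - \<alpha>"] assms by (intro summable_mult) simp
  have nonneg: "eventually (\<lambda>k. 0 \<le> C * real k powr (1 - \<alpha>)) at_top"
    using C by simp
  note weight_asymp = crit_weight_asymp_equiv[folded C_def]
  show "summable (crit_weight m X)"
    by (rule summable_asymp_equiv_nonneg[OF weight_asymp nonneg comparison])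
  have "(\<lambda>M. \<Sum>j. crit_weight m X (j + Suc M)) \<sim>[at_top] (\<lambda>M. \<Sum>j. C * real (j + Suc M) powr (1 - \<alpha>))"
    by (rule asymp_equiv_tail_sums[OF weight_asymp nonneg comparison])
  also have "\<dots> = (\<lambda>M. C * (\<Sum>j. real (j + Suc M) powr -(1 + \<beta>)))"
  proof -
    have "summable (\<lambda>j. real (j + Suc M) powr -(1 + \<beta>))" for M
      using summable_real_powr_iff[of "-(1 + \<beta>)"] \<beta> by (subst summable_iff_shift) auto
    then show ?thesis
      by (simp add: fun_eq_iff exponent suminf_mult)
  qed
  also have "\<dots> \<sim>[at_top] (\<lambda>M. C * (real M powr -\<beta> / \<beta>))"
    by (intro asymp_equiv_mult asymp_equiv_refl powr_tail_sum_asymp_equiv \<beta>)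
  finally show "(\<lambda>M. \<Sum>j. crit_weight m X (j + Suc M))
                  \<sim>[at_top] (\<lambda>M. (real m - 1) * c0 / (\<alpha> - 2) * real M powr -(\<alpha> - 2))"
    by (simp add: C_def \<beta>_def)
qed

lemma p_crit_eq_inverse_suminf:
  assumes "2 < \<alpha>"
  shows "p_crit m X = 1 / suminf (crit_weight m X)" and "0 < suminf (crit_weight m X)"
proof -
  have summable: "summable (crit_weight m X)"
    by (rule crit_weight_tail_asymp_equiv(1)[OF assms])
  then show "p_crit m X = 1 / suminf (crit_weight m X)"
    by (simp add: p_crit_eq_suminf_crit_weight[OF m_ge_2])
  have "crit_weight m X (ell0 X) \<le> suminf (crit_weight m X)"
    using sum_le_suminf[OF summable, of "{ell0 X}"] crit_weight_nonneg[OF m_ge_2] by simp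
  with crit_weight_ell0_pos show "0 < suminf (crit_weight m X)"
    by linarith
qed

lemma inverse_p_crit_minus_inverse_p_M_asymp_equiv:
  assumes \<alpha>: "2 < \<alpha>"
  shows "(\<lambda>M. 1 / p_crit m X - 1 / p_M m X \<alpha> M) \<sim>[at_top]
           (\<lambda>M. ((real m - 1) * c0 / (\<alpha> - 2) + crit_weight m X (ell0 X)) * real M powr -(\<alpha> - 2))"
proof -
  define u where "u = crit_weight m X"
  define l where "l = ell0 X"
  define \<beta> where "\<beta> = \<alpha> - 2"
  have \<beta>: "0 < \<beta>"
    using \<alpha> by (simp add: \<beta>_def)
  have partial: "(\<Sum>k\<le>M. u k) = suminf u - (\<Sum>j. u (j + Suc M))" for M
    using suminf_split_initial_segment[OF crit_weight_tail_asymp_equiv(1)[OF \<alpha>], of "Suc M"]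
    by (simp add: u_def lessThan_Suc_atMost)
  have "eventually (\<lambda>M. 1 / p_crit m X - 1 / p_M m X \<alpha> M
                          = (\<Sum>j. u (j + Suc M)) + u l * real M powr -\<beta>) at_top"
    using eventually_ge_at_top[of l]
  proof eventually_elim
    case (elim M)
    then have "1 / p_M m X \<alpha> M = (\<Sum>k\<le>M. u k) - real M powr -\<beta> * u l"
      using p_M_eq[OF exists_pmf_pos _ less_imp_le[OF \<alpha>], of M] \<alpha>
      by (simp add: u_def l_def \<beta>_def)
    then show ?case
      using p_crit_eq_inverse_suminf(1)[OF \<alpha>, folded u_def] by (simp add: partial algebra_simps)
  qed
  then have "(\<lambda>M. 1 / p_crit m X - 1 / p_M m X \<alpha> M)
               \<sim>[at_top] (\<lambda>M. (\<Sum>j. u (j + Suc M)) + u l * real M powr -\<beta>)"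
    by (rule asymp_equiv_refl_ev)
  also have "\<dots> \<sim>[at_top] (\<lambda>M. (real m - 1) * c0 / \<beta> * real M powr -\<beta> + u l * real M powr -\<beta>)"
    using crit_weight_tail_asymp_equiv(2)[OF \<alpha>] crit_weight_ell0_pos m_ge_2 c0_pos \<beta>
    by (intro asymp_equiv_add_nonneg asymp_equiv_refl always_eventually)
       (simp_all add: u_def l_def \<beta>_def)
  also have "\<dots> = (\<lambda>M. ((real m - 1) * c0 / (\<alpha> - 2) + crit_weight m X (ell0 X)) * real M powr -(\<alpha> - 2))"
    by (simp add: fun_eq_iff u_def l_def \<beta>_def algebra_simps)
  finally show ?thesis .
qed

lemma p_M_minus_p_crit_asymp_equiv_gt2:
  assumes \<alpha>: "2 < \<alpha>"
  shows "(\<lambda>M. p_M m X \<alpha> M - p_crit m X) \<sim>[at_top]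
           (\<lambda>M. (p_crit m X)\<^sup>2 * ((real m - 1) * c0 / (\<alpha> - 2) + crit_weight m X (ell0 X))
                  / real M powr (\<alpha> - 2))"
proof -
  define p where "p = p_crit m X"
  define c49 where "c49 = (real m - 1) * c0 / (\<alpha> - 2) + crit_weight m X (ell0 X)"
  define D where "D M = 1 / p - 1 / p_M m X \<alpha> M" for M
  have p: "0 < p"
    using p_crit_eq_inverse_suminf[OF \<alpha>] by (simp add: p_def)
  have D_asymp: "D \<sim>[at_top] (\<lambda>M. c49 * real M powr -(\<alpha> - 2))"
    unfolding D_def[abs_def] p_def c49_def by (rule inverse_p_crit_minus_inverse_p_M_asymp_equiv[OF \<alpha>])
  have "(\<lambda>M. c49 * real M powr -(\<alpha> - 2)) \<longlonglongrightarrow> 0"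
    using \<alpha> by real_asymp
  then have "D \<longlonglongrightarrow> 0"
    using tendsto_asymp_equiv_cong[OF D_asymp] by simp
  then have "(\<lambda>M. 1 / (1 / p - D M)) \<longlonglongrightarrow> 1 / (1 / p - 0)"
    using p by (intro tendsto_intros) simp_all
  then have p_M_lim: "(\<lambda>M. p_M m X \<alpha> M) \<longlonglongrightarrow> p"
    using p by (simp add: D_def)
  have "eventually (\<lambda>M. p_M m X \<alpha> M - p = p * p_M m X \<alpha> M * D M) at_top"
    using order_tendstoD(1)[OF p_M_lim p]
    by eventually_elim (use p in \<open>simp add: D_def field_simps\<close>)
  then have "(\<lambda>M. p_M m X \<alpha> M - p) \<sim>[at_top] (\<lambda>M. p * p_M m X \<alpha> M * D M)"
    by (rule asymp_equiv_refl_ev)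
  also have "\<dots> \<sim>[at_top] (\<lambda>M. p * p * (c49 * real M powr -(\<alpha> - 2)))"
    using p p_M_lim
    by (intro asymp_equiv_mult asymp_equiv_refl D_asymp tendsto_imp_asymp_equiv_const) simp_all
  also have "\<dots> = (\<lambda>M. p\<^sup>2 * c49 / real M powr (\<alpha> - 2))"
    by (simp only: powr_minus) (simp add: fun_eq_iff divide_inverse power2_eq_square)
  finally show ?thesis
    by (simp add: p_def c49_def)
qed

lemma crit_weight_partial_sums_asymp_equiv_ln:
  assumes "\<alpha> = 2"
  shows "(\<lambda>M. \<Sum>k\<le>M. crit_weight m X k) \<sim>[at_top] (\<lambda>M. (real m - 1) * c0 * ln (real M))"
proof -
  define C where "C = (real m - 1) * c0"
  have C: "0 < C"
    using m_ge_2 c0_pos by (simp add: C_def)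
  have "crit_weight m X \<sim>[at_top] (\<lambda>k. C * real k powr (1 - \<alpha>))"
    using crit_weight_asymp_equiv by (simp add: C_def)
  also have "(\<lambda>k. C * real k powr (1 - \<alpha>)) = (\<lambda>k. C * inverse (real k))"
    using assms by (simp add: fun_eq_iff powr_minus)
  finally have weight_asymp: "crit_weight m X \<sim>[at_top] (\<lambda>k. C * inverse (real k))" .
  have harmonic: "(\<lambda>M. \<Sum>k\<le>M. C * inverse (real k)) = (\<lambda>M. C * harm M)"
    by (simp add: fun_eq_iff sum_distrib_left[symmetric] sum_atMost_inverse_eq_harm)
  have "filterlim (\<lambda>M. C * harm M) at_top at_top"
    by (rule filterlim_tendsto_pos_mult_at_top[OF tendsto_const C harm_at_top])
  then have "(\<lambda>M. \<Sum>k\<le>M. crit_weight m X k) \<sim>[at_top] (\<lambda>M. \<Sum>k\<le>M. C * inverse (real k))"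
    using C unfolding harmonic[symmetric] by (intro asymp_equiv_partial_sums weight_asymp) simp_all
  also have "\<dots> = (\<lambda>M. C * harm M)"
    by (rule harmonic)
  also have "\<dots> \<sim>[at_top] (\<lambda>M. C * ln (real M))"
    by (intro asymp_equiv_mult asymp_equiv_refl harm_asymp_equiv_ln)
  finally show ?thesis
    by (simp add: C_def)
qed

lemma p_crit_eq_0:
  assumes "\<alpha> = 2"
  shows "p_crit m X = 0"
proof -
  have "filterlim (\<lambda>M. (real m - 1) * c0 * ln (real M)) at_top at_top"
    using m_ge_2 c0_pos by real_asymp
  then have diverges: "filterlim (\<lambda>M. \<Sum>k\<le>M. crit_weight m X k) at_top at_top"
    by (rule asymp_equiv_at_top_transfer[OF asymp_equiv_symI[OF
          crit_weight_partial_sums_asymp_equiv_ln[OF assms]]])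
  have "\<not> summable (crit_weight m X)"
  proof
    assume "summable (crit_weight m X)"
    then have "(\<lambda>M. \<Sum>k\<le>M. crit_weight m X k) \<longlonglongrightarrow> suminf (crit_weight m X)"
      by (rule summable_LIMSEQ')
    from not_tendsto_and_filterlim_at_infinity[OF sequentially_bot this
           filterlim_at_top_imp_at_infinity[OF diverges]]
    show False .
  qed
  then show ?thesis
    by (simp add: p_crit_eq_suminf_crit_weight[OF m_ge_2])
qed

lemma p_M_minus_p_crit_asymp_equiv_eq2:
  assumes \<alpha>: "\<alpha> = 2"
  shows "(\<lambda>M. p_M m X \<alpha> M - p_crit m X) \<sim>[at_top] (\<lambda>M. 1 / ((real m - 1) * c0) * (1 / ln (real M)))"
proof -
  define C where "C = (real m - 1) * c0"
  define U where "U M = (\<Sum>k\<le>M. crit_weight m X k) - crit_weight m X (ell0 X)" for M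
  have "(\<lambda>_. - crit_weight m X (ell0 X)) \<in> o(\<lambda>M. C * ln (real M))"
    using m_ge_2 c0_pos unfolding C_def by real_asymp
  then have U_asymp: "U \<sim>[at_top] (\<lambda>M. C * ln (real M))"
    using crit_weight_partial_sums_asymp_equiv_ln[OF \<alpha>, folded C_def]
    unfolding U_def[abs_def] diff_conv_add_uminus by (subst asymp_equiv_add_right)
  have "eventually (\<lambda>M. p_M m X \<alpha> M - p_crit m X = inverse (U M)) at_top"
    using eventually_ge_at_top[of "ell0 X"]
  proof eventually_elim
    case (elim M)
    with p_M_eq[OF exists_pmf_pos elim eq_refl[OF \<alpha>[symmetric]]] \<alpha> show ?case
      by (simp add: p_crit_eq_0 U_def divide_inverse)
  qed
  then have "(\<lambda>M. p_M m X \<alpha> M - p_crit m X) \<sim>[at_top] (\<lambda>M. inverse (U M))"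
    by (rule asymp_equiv_refl_ev)
  also have "\<dots> \<sim>[at_top] (\<lambda>M. inverse (C * ln (real M)))"
    by (rule asymp_equiv_inverse[OF U_asymp])
  also have "\<dots> = (\<lambda>M. 1 / ((real m - 1) * c0) * (1 / ln (real M)))"
    by (simp add: fun_eq_iff C_def divide_inverse)
  finally show ?thesis .
qed

end

theorem lemma8p3:
  fixes m :: nat and X :: "nat pmf" and c0 \<alpha> :: real
  assumes "m \<ge> 2"
    and "pmf X 0 = 0"
    and "0 < c0"
    and "2 \<le> \<alpha>" and "\<alpha> \<le> 4"
    and "(\<lambda>k. pmf X k) \<sim>[at_top] (\<lambda>k. c0 * real m powr (- real k) * real k powr (- \<alpha>))"
  shows "(2 < \<alpha> \<longrightarrow>
           (let c49 = (real m - 1) * c0 / (\<alpha> - 2)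
                      + (((real m - 1) * real (ell0 X) - 1) * real m ^ ell0 X + 1) * pmf X (ell0 X);
                c48 = (p_crit m X)\<^sup>2 * c49
            in 0 < c48 \<and>
               (\<lambda>M. p_M m X \<alpha> M - p_crit m X) \<sim>[at_top] (\<lambda>M. c48 / real M powr (\<alpha> - 2))))
       \<and> (\<alpha> = 2 \<longrightarrow>
           (\<lambda>M. p_M m X \<alpha> M - p_crit m X) \<sim>[at_top]
             (\<lambda>M. 1 / ((real m - 1) * c0) * (1 / ln (real M))))"
proof -
  interpret geometric_power_tail m X c0 \<alpha>
    using assms(1,3,6) by unfold_locales
  have c49: "(((real m - 1) * real (ell0 X) - 1) * real m ^ ell0 X + 1) * pmf X (ell0 X)
               = crit_weight m X (ell0 X)"
    by (simp add: crit_weight_def crit_fun_def)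
  have "0 < (p_crit m X)\<^sup>2 * ((real m - 1) * c0 / (\<alpha> - 2) + crit_weight m X (ell0 X))" if "2 < \<alpha>"
    using p_crit_eq_inverse_suminf[OF that] crit_weight_ell0_pos m_ge_2 c0_pos that
    by (intro mult_pos_pos add_pos_pos divide_pos_pos) simp_all
  then show ?thesis
    unfolding Let_def c49
    using p_M_minus_p_crit_asymp_equiv_gt2 p_M_minus_p_crit_asymp_equiv_eq2 by blast
qed

end
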